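(* For every $g\geqslant 2$ there exists a complex two-dimensional family of compact Riemann surfaces of genus $g$ admitting a group of automorphisms isomorphic to the dihedral group $\mathbf{D}_{2(g-1)}=\langle r,s: r^{2(g-1)}=s^2=(sr)^2=1\rangle$ of order $4g-4$ acting with signature $(0;2,2,2,2,2)$. If moreover $g-1$ is prime, then any two actions of $\mathbf{D}_{2(g-1)}$ with signature $(0;2,2,2,2,2)$ on surfaces of genus $g$ are topologically equivalent, i.e. the family is equisymmetric; every such action is equivalent to the one given by $x_1\mapsto s,\ x_2\mapsto s,\ x_3\mapsto sr^{g},\ x_4\mapsto sr,\ x_5\mapsto r^{g-1}$ on $\Delta=\langle x_1,\dots,x_5: x_i^2=1,\ x_1x_2x_3x_4x_5=1\rangle$.
   Context: A finite group $G$ acts on a compact Riemann surface $S$ with signature $(h; m_1,\dots,m_l)$ if $G$ embeds in $\mathrm{Aut}(S)$, the quotient $S/G$ has genus $h$, and the branched regular covering $S \to S/G$ has exactly $l$ branch values with branch orders $m_1,\dots,m_l$; equivalently there is a Fuchsian group $\Delta$ of that signature and an epimorphism $\Delta\to G$ whose kernel is a surface group uniformizing $S$. Two actions $\psi_1,\psi_2:G\to\mathrm{Aut}(S)$ are topologically equivalent if there exist $\omega\in\mathrm{Aut}(G)$ and an orientation-preserving homeomorphism $f$ of $S$ with $\psi_2(x)=f\psi_1(\omega(x))f^{-1}$ for all $x\in G$; for genus-zero quotients this corresponds to epimorphisms in the same orbit under $\mathrm{Aut}(G)$ and braid transformations of $\Delta$. *)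

theory Defs
  imports "HOL-Algebra.Algebra" "HOL-Computational_Algebra.Primes"
begin

text \<open>Concrete dihedral group of order 2n: the pair (a, e) stands for r^a s^e
  (a < n, e = True meaning one factor s), with s r = r^(-1) s.
  Multiplication: r^a s^e * r^b s^f = r^(a +- b) s^(e+f).\<close>
definition dihedral :: "nat \<Rightarrow> (nat \<times> bool) monoid" where
  "dihedral n = \<lparr> carrier = {0..<n} \<times> UNIV,
     monoid.mult = (\<lambda>(a, e) (b, f). ((if e then a + n - b else a + b) mod n, e \<noteq> f)),
     monoid.one = (0, False) \<rparr>"

definition rot :: "nat \<Rightarrow> nat \<Rightarrow> nat \<times> bool" where
  "rot n k = (k mod n, False)"

definition srot :: "nat \<Rightarrow> nat \<Rightarrow> nat \<times> bool" where
  "srot n k = ((n - k mod n) mod n, True)"   \<comment> \<open>s r^k = r^(-k) s; srot n 0 = s\<close>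

definition list_prod :: "('a, 'b) monoid_scheme \<Rightarrow> 'a list \<Rightarrow> 'a" where
  "list_prod G xs = foldr (\<lambda>x y. x \<otimes>\<^bsub>G\<^esub> y) xs \<one>\<^bsub>G\<^esub>"

text \<open>Generating vectors of signature (0;2,2,2,2,2): images (a1,...,a5) of x1,...,x5
  under an epimorphism Delta -> G with surface kernel: each a_i has order exactly 2,
  a1...a5 = 1, and the a_i generate G.\<close>
definition gen_vector_02222 :: "('a, 'b) monoid_scheme \<Rightarrow> 'a list \<Rightarrow> bool" where
  "gen_vector_02222 G v \<longleftrightarrow> length v = 5 \<and> set v \<subseteq> carrier G
     \<and> (\<forall>x\<in>set v. x \<noteq> \<one>\<^bsub>G\<^esub> \<and> x \<otimes>\<^bsub>G\<^esub> x = \<one>\<^bsub>G\<^esub>)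
     \<and> list_prod G v = \<one>\<^bsub>G\<^esub>
     \<and> generate G (set v) = carrier G"

text \<open>Standard braid (Hurwitz) move sigma_i on a vector (indices from 0).\<close>
definition braid_move :: "('a, 'b) monoid_scheme \<Rightarrow> nat \<Rightarrow> 'a list \<Rightarrow> 'a list" where
  "braid_move G i v = v[i := v ! i \<otimes>\<^bsub>G\<^esub> v ! (Suc i) \<otimes>\<^bsub>G\<^esub> inv\<^bsub>G\<^esub> (v ! i), Suc i := v ! i]"

definition equiv_step :: "('a, 'b) monoid_scheme \<Rightarrow> 'a list \<Rightarrow> 'a list \<Rightarrow> bool" where
  "equiv_step G v w \<longleftrightarrow> set v \<subseteq> carrier G \<and> set w \<subseteq> carrier G \<and>
     ((\<exists>\<phi>\<in>iso G G. w = map \<phi> v) \<or> (\<exists>i. Suc i < length v \<and> w = braid_move G i v))"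

text \<open>Topological equivalence of actions with genus-0 quotient: same orbit under
  Aut(G) and the braid group.\<close>
definition top_equiv :: "('a, 'b) monoid_scheme \<Rightarrow> 'a list \<Rightarrow> 'a list \<Rightarrow> bool" where
  "top_equiv G = equivclp (equiv_step G)"

end

theory Submission
  imports Defs "HOL-Number_Theory.Cong"
begin

text \<open>
  The involutions of the dihedral group of order 4p are the reflections r^a s and the central
  half turn z = r^p. The product relation of a generating vector of signature (0;2,2,2,2,2) forces
  an even number of reflections. With none, the product is z^5 \<noteq> 1; with two, r^a s and r^b s,
  it forces a = b (mod p), so the vector lies in the proper subgroup generated by r^p and r^a s.
  Hence z occurs exactly once and, being central, is carried to the last place by braid moves,
  leaving (r^c1 s, r^c2 s, r^c3 s, r^c4 s, z) with c1 - c2 + c3 - c4 = p (mod 2p). A braid move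
  acts on two adjacent exponents by (a, b) \<mapsto> (2a - b, a), an automorphism by a \<mapsto> u a + t with u
  a unit modulo 2p. When p is prime, generation says that p does not divide both c1 - c2 and
  c2 - c3, and then at most two braid moves make c1 - c2 or c2 - c3 a unit; iterated braid moves
  and one automorphism then reach (s, s, r^-(p+1) s, r^-1 s, z).
\<close>

definition dih :: "nat \<Rightarrow> int \<Rightarrow> bool \<Rightarrow> nat \<times> bool" where
  "dih n a e = (nat (a mod int n), e)"

lemma dih_eq_iff: "0 < n \<Longrightarrow> dih n a e = dih n b f \<longleftrightarrow> [a = b] (mod int n) \<and> e = f"
  unfolding dih_def cong_def by (auto simp: eq_nat_nat_iff)

lemma dih_cong: "0 < n \<Longrightarrow> [a = b] (mod int n) \<Longrightarrow> dih n a e = dih n b e"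
  by (simp add: dih_eq_iff)

lemma carrier_dihedral: "carrier (dihedral n) = {0..<n} \<times> UNIV"
  by (simp add: dihedral_def)

lemma one_dihedral: "\<one>\<^bsub>dihedral n\<^esub> = dih n 0 False"
  by (simp add: dihedral_def dih_def)

lemma dih_in_carrier: "0 < n \<Longrightarrow> dih n a e \<in> carrier (dihedral n)"
  by (simp add: carrier_dihedral dih_def nat_less_iff)

lemma dihedral_elem_cases:
  assumes "x \<in> carrier (dihedral n)"
  obtains a e where "x = dih n a e"
proof -
  from assms have "x = dih n (int (fst x)) (snd x)"
    by (cases x) (simp add: carrier_dihedral dih_def)
  then show ?thesis by (rule that)
qed

lemma srot_eq_dih:
  assumes "0 < n"
  shows "srot n k = dih n (- int k) True"
proof -
  have "k mod n \<le> n" using assms by (simp add: less_imp_le)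
  then have "int ((n - k mod n) mod n) = (int n - int k mod int n) mod int n"
    by (simp add: of_nat_mod of_nat_diff zmod_int)
  also have "\<dots> = (- int k) mod int n"
    by (simp add: mod_diff_eq[symmetric] mod_simps)
  finally show ?thesis
    unfolding srot_def dih_def by (metis nat_int)
qed

lemma rot_eq_dih: "rot n k = dih n (int k) False"
  by (simp add: rot_def dih_def flip: zmod_int)

lemma dih_mult:
  assumes "0 < n"
  shows "dih n a e \<otimes>\<^bsub>dihedral n\<^esub> dih n b f = dih n (if e then a - b else a + b) (e \<noteq> f)"
proof -
  have b: "nat (b mod int n) < n" using assms by (simp add: nat_less_iff)
  have "int ((nat (a mod int n) + n - nat (b mod int n)) mod n)
      = (a mod int n - b mod int n + int n) mod int n"
    using b assms by (simp add: of_nat_mod of_nat_diff algebra_simps)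
  also have "\<dots> = (a - b) mod int n" by (simp add: mod_diff_eq)
  finally have minus: "(nat (a mod int n) + n - nat (b mod int n)) mod n = nat ((a - b) mod int n)"
    by (metis nat_int)
  have "int ((nat (a mod int n) + nat (b mod int n)) mod n) = (a + b) mod int n"
    using assms by (simp add: of_nat_mod mod_simps)
  then have plus: "(nat (a mod int n) + nat (b mod int n)) mod n = nat ((a + b) mod int n)"
    by (metis nat_int)
  show ?thesis by (simp add: dihedral_def dih_def minus plus)
qed

lemma dih_eq_one_iff: "0 < n \<Longrightarrow> dih n a e = \<one>\<^bsub>dihedral n\<^esub> \<longleftrightarrow> int n dvd a \<and> \<not> e"
  by (simp add: one_dihedral dih_eq_iff cong_0_iff)

lemma group_dihedral:
  assumes "0 < n"
  shows "group (dihedral n)"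
proof (rule groupI)
  fix x y assume "x \<in> carrier (dihedral n)" "y \<in> carrier (dihedral n)"
  then show "x \<otimes>\<^bsub>dihedral n\<^esub> y \<in> carrier (dihedral n)"
    by (elim dihedral_elem_cases) (simp add: dih_mult assms dih_in_carrier)
next
  fix x y z assume "x \<in> carrier (dihedral n)" "y \<in> carrier (dihedral n)" "z \<in> carrier (dihedral n)"
  then show "x \<otimes>\<^bsub>dihedral n\<^esub> y \<otimes>\<^bsub>dihedral n\<^esub> z = x \<otimes>\<^bsub>dihedral n\<^esub> (y \<otimes>\<^bsub>dihedral n\<^esub> z)"
    by (elim dihedral_elem_cases) (auto simp: dih_mult assms algebra_simps)
next
  fix x assume "x \<in> carrier (dihedral n)"
  then show "\<one>\<^bsub>dihedral n\<^esub> \<otimes>\<^bsub>dihedral n\<^esub> x = x"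
    by (elim dihedral_elem_cases) (simp add: dih_mult assms one_dihedral)
next
  fix x assume "x \<in> carrier (dihedral n)"
  then obtain a e where x: "x = dih n a e" by (rule dihedral_elem_cases)
  show "\<exists>y\<in>carrier (dihedral n). y \<otimes>\<^bsub>dihedral n\<^esub> x = \<one>\<^bsub>dihedral n\<^esub>"
    by (rule bexI[of _ "dih n (if e then a else - a) e"])
      (auto simp: x dih_mult assms one_dihedral dih_in_carrier)
qed (simp add: one_dihedral dih_in_carrier assms)

lemma inv_dih: "0 < n \<Longrightarrow> inv\<^bsub>dihedral n\<^esub> (dih n a e) = dih n (if e then a else - a) e"
  by (rule group.inv_equality[OF group_dihedral]) (auto simp: dih_mult one_dihedral dih_in_carrier)

lemma snd_dihedral_mult: "snd (x \<otimes>\<^bsub>dihedral n\<^esub> y) = (snd x \<noteq> snd y)"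
  by (cases x; cases y) (simp add: dihedral_def)

\<comment> \<open>the endomorphism r \<mapsto> r^u, s \<mapsto> r^t s\<close>
definition dih_affine :: "nat \<Rightarrow> int \<Rightarrow> int \<Rightarrow> nat \<times> bool \<Rightarrow> nat \<times> bool" where
  "dih_affine n u t x = dih n (u * int (fst x) + (if snd x then t else 0)) (snd x)"

lemma dih_affine_dih:
  assumes "0 < n"
  shows "dih_affine n u t (dih n a e) = dih n (u * a + (if e then t else 0)) e"
proof -
  have "[int (fst (dih n a e)) = a] (mod int n)"
    using assms by (simp add: dih_def cong_def)
  then have "[u * int (fst (dih n a e)) + (if e then t else 0)
      = u * a + (if e then t else 0)] (mod int n)"
    by (intro cong_add cong_scalar_left) auto
  then show ?thesis
    unfolding dih_affine_def using dih_cong[OF assms] by (simp add: dih_def)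
qed

lemma dih_affine_iso:
  assumes n: "0 < n" and u: "coprime u (int n)"
  shows "dih_affine n u t \<in> iso (dihedral n) (dihedral n)"
proof (rule isoI)
  show "dih_affine n u t \<in> hom (dihedral n) (dihedral n)"
  proof (rule homI)
    fix x assume "x \<in> carrier (dihedral n)"
    then show "dih_affine n u t x \<in> carrier (dihedral n)"
      by (simp add: dih_affine_def dih_in_carrier n)
  next
    fix x y assume "x \<in> carrier (dihedral n)" "y \<in> carrier (dihedral n)"
    then show "dih_affine n u t (x \<otimes>\<^bsub>dihedral n\<^esub> y)
        = dih_affine n u t x \<otimes>\<^bsub>dihedral n\<^esub> dih_affine n u t y"
      by (elim dihedral_elem_cases) (auto simp: dih_mult dih_affine_dih n algebra_simps)
  qed
next
  have "inj_on (dih_affine n u t) (carrier (dihedral n))"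
  proof (rule inj_onI)
    fix x y assume "x \<in> carrier (dihedral n)" "y \<in> carrier (dihedral n)"
      and eq: "dih_affine n u t x = dih_affine n u t y"
    then obtain a e b f where x: "x = dih n a e" and y: "y = dih n b f"
      by (metis dihedral_elem_cases)
    from eq have "e = f" and "int n dvd u * a - u * b"
      by (auto simp: x y dih_affine_dih n dih_eq_iff cong_iff_dvd_diff split: if_splits)
    moreover have "coprime (int n) u" using u by (simp add: coprime_commute)
    ultimately show "x = y"
      by (simp add: x y dih_eq_iff n cong_iff_dvd_diff coprime_dvd_mult_right_iff
          flip: right_diff_distrib)
  qed
  moreover have "dih_affine n u t ` carrier (dihedral n) \<subseteq> carrier (dihedral n)"
    by (auto simp: dih_affine_def dih_in_carrier n)
  ultimately show "bij_betw (dih_affine n u t) (carrier (dihedral n)) (carrier (dihedral n))"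
    by (simp add: bij_betw_def endo_inj_surj carrier_dihedral)
qed

lemma top_equiv_refl: "top_equiv G v v"
  by (simp add: top_equiv_def)

lemma top_equiv_sym: "top_equiv G v w \<Longrightarrow> top_equiv G w v"
  unfolding top_equiv_def by (rule equivclp_sym)

lemma top_equiv_trans [trans]: "top_equiv G u v \<Longrightarrow> top_equiv G v w \<Longrightarrow> top_equiv G u w"
  unfolding top_equiv_def by (rule equivclp_trans)

lemma top_equiv_braid_move:
  assumes "group G" "set v \<subseteq> carrier G" "Suc i < length v"
  shows "top_equiv G v (braid_move G i v)"
proof -
  interpret group G by fact
  have "v ! i \<in> carrier G" "v ! Suc i \<in> carrier G" using assms by auto
  then have "set (braid_move G i v) \<subseteq> carrier G"
    unfolding braid_move_def using assms(2) by (intro set_update_subsetI) auto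
  then show ?thesis
    unfolding top_equiv_def equiv_step_def using assms by blast
qed

lemma top_equiv_map_iso:
  assumes "\<phi> \<in> iso G G" "set v \<subseteq> carrier G"
  shows "top_equiv G v (map \<phi> v)"
proof -
  have "set (map \<phi> v) \<subseteq> carrier G"
    using assms by (auto simp: iso_def hom_def)
  then show ?thesis
    unfolding top_equiv_def equiv_step_def using assms by blast
qed

lemma list_prod_Nil [simp]: "list_prod G [] = \<one>\<^bsub>G\<^esub>"
  by (simp add: list_prod_def)

lemma list_prod_Cons [simp]: "list_prod G (x # xs) = x \<otimes>\<^bsub>G\<^esub> list_prod G xs"
  by (simp add: list_prod_def)

lemma (in monoid) list_prod_closed: "set xs \<subseteq> carrier G \<Longrightarrow> list_prod G xs \<in> carrier G"
  by (induction xs) auto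

lemma snd_list_prod_dihedral: "snd (list_prod (dihedral n) xs) = odd (length (filter snd xs))"
  by (induction xs) (auto simp: snd_dihedral_mult one_dihedral dih_def)

lemma (in group) list_prod_central:
  assumes z: "z \<in> carrier G" "\<And>x. x \<in> carrier G \<Longrightarrow> z \<otimes> x = x \<otimes> z"
    and xs: "set xs \<subseteq> carrier G"
  shows "list_prod G xs = z [^] count_list xs z \<otimes> list_prod G (removeAll z xs)"
  using xs
proof (induction xs)
  case (Cons x xs)
  then have x: "x \<in> carrier G" and P: "list_prod G (removeAll z xs) \<in> carrier G"
    by (auto intro!: list_prod_closed)
  have zk: "z [^] count_list xs z \<in> carrier G" using z by simp
  show ?case
  proof (cases "x = z")
    case True
    have "z \<otimes> z [^] count_list xs z = z [^] count_list xs z \<otimes> z"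
      using z by (simp flip: nat_pow_Suc2)
    then show ?thesis
      using Cons x P zk True by (simp flip: m_assoc)
  next
    case False
    have "x \<otimes> z [^] count_list xs z = z [^] count_list xs z \<otimes> x"
      using z x by (metis group_commutes_pow)
    then show ?thesis
      using Cons x P zk False by (simp flip: m_assoc)
  qed
qed simp

lemma (in group) top_equiv_move_central:
  assumes z: "z \<in> carrier G" "\<And>x. x \<in> carrier G \<Longrightarrow> z \<otimes> x = x \<otimes> z"
    and xs: "set xs \<subseteq> carrier G" and ys: "set ys \<subseteq> carrier G"
  shows "top_equiv G (xs @ z # ys) (xs @ ys @ [z])"
  using xs ys
proof (induction ys arbitrary: xs)
  case (Cons y ys)
  have y: "y \<in> carrier G" using Cons.prems by simp
  have "z \<otimes> y \<otimes> inv z = y"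
    using z y by (simp add: m_assoc)
  then have "braid_move G (length xs) (xs @ z # y # ys) = (xs @ [y]) @ z # ys"
    by (simp add: braid_move_def list_update_append nth_append)
  moreover have "top_equiv G (xs @ z # y # ys) (braid_move G (length xs) (xs @ z # y # ys))"
    using Cons.prems z by (intro top_equiv_braid_move is_group) auto
  moreover have "top_equiv G ((xs @ [y]) @ z # ys) ((xs @ [y]) @ ys @ [z])"
    using Cons.IH[of "xs @ [y]"] Cons.prems by simp
  ultimately show ?case using top_equiv_trans by fastforce
qed (simp add: top_equiv_refl)

definition half_turn :: "nat \<Rightarrow> nat \<times> bool" where
  "half_turn p = dih (2 * p) (int p) False"

lemma half_turn_in_carrier: "0 < p \<Longrightarrow> half_turn p \<in> carrier (dihedral (2 * p))"
  by (simp add: half_turn_def dih_in_carrier)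

lemma half_turn_central:
  assumes "0 < p" "x \<in> carrier (dihedral (2 * p))"
  shows "half_turn p \<otimes>\<^bsub>dihedral (2 * p)\<^esub> x = x \<otimes>\<^bsub>dihedral (2 * p)\<^esub> half_turn p"
proof -
  obtain a e where x: "x = dih (2 * p) a e" using assms(2) by (rule dihedral_elem_cases)
  have "[int p + a = a - int p] (mod int (2 * p))"
    by (simp add: cong_iff_dvd_diff)
  then show ?thesis
    using assms(1) by (auto simp: x half_turn_def dih_mult add.commute intro: dih_cong)
qed

lemma half_turn_pow:
  assumes "0 < p"
  shows "half_turn p [^]\<^bsub>dihedral (2 * p)\<^esub> k = dih (2 * p) (int k * int p) False"
  by (induction k) (simp_all add: one_dihedral half_turn_def dih_mult assms algebra_simps)

lemma dihedral_involution_cases: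
  assumes p: "0 < p" and x: "x \<in> carrier (dihedral (2 * p))"
    and nontriv: "x \<noteq> \<one>\<^bsub>dihedral (2 * p)\<^esub>" and invol: "x \<otimes>\<^bsub>dihedral (2 * p)\<^esub> x = \<one>\<^bsub>dihedral (2 * p)\<^esub>"
  shows "(\<exists>a. x = dih (2 * p) a True) \<or> x = half_turn p"
proof -
  obtain a e where xa: "x = dih (2 * p) a e" using x by (rule dihedral_elem_cases)
  show ?thesis
  proof (cases e)
    case False
    have n: "0 < 2 * p" using p by simp
    from invol have "dih (2 * p) (a + a) False = \<one>\<^bsub>dihedral (2 * p)\<^esub>"
      by (simp add: xa False dih_mult p)
    then have "int p dvd a"
      by (simp add: dih_eq_one_iff p)
    then obtain k where k: "a = int p * k" ..
    have "\<not> 2 * int p dvd a"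
      using nontriv dih_eq_one_iff[OF n] by (simp add: xa False)
    have "odd k"
    proof
      assume "even k"
      then obtain i where "k = 2 * i" ..
      then have "a = 2 * int p * i" by (simp add: k)
      with \<open>\<not> 2 * int p dvd a\<close> show False by simp
    qed
    then obtain i where "k = 2 * i + 1" ..
    then have "[a = int p] (mod int (2 * p))"
      by (simp add: k cong_iff_dvd_diff algebra_simps)
    then show ?thesis
      by (simp add: xa False half_turn_def dih_cong p)
  qed (use xa in auto)
qed

\<comment> \<open>the subgroup generated by r^m and r^c s\<close>
definition dih_subgroup :: "nat \<Rightarrow> nat \<Rightarrow> int \<Rightarrow> (nat \<times> bool) set" where
  "dih_subgroup n m c =
     {x \<in> carrier (dihedral n). int m dvd int (fst x) - (if snd x then c else 0)}"

lemma dih_in_dih_subgroup_iff: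
  assumes "0 < n" "m dvd n"
  shows "dih n a e \<in> dih_subgroup n m c \<longleftrightarrow> int m dvd a - (if e then c else 0)"
proof -
  have "int n dvd a mod int n - a"
    by (simp add: mod_eq_dvd_iff[symmetric])
  then have "int m dvd a mod int n - a"
    using assms(2) by (meson dvd_trans int_dvd_int_iff)
  then have "int m dvd a mod int n - d \<longleftrightarrow> int m dvd a - d" for d
    using dvd_add_right_iff[of "int m" "a mod int n - a" "a - d"] by simp
  moreover have "int (fst (dih n a e)) = a mod int n" "snd (dih n a e) = e"
    using assms(1) by (simp_all add: dih_def)
  ultimately show ?thesis
    using dih_in_carrier[OF assms(1)] by (simp add: dih_subgroup_def)
qed

lemma subgroup_dih_subgroup:
  assumes n: "0 < n" and m: "m dvd n"
  shows "subgroup (dih_subgroup n m c) (dihedral n)"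
proof -
  interpret group "dihedral n" using group_dihedral[OF n] .
  note mem = dih_in_dih_subgroup_iff[OF n m]
  show ?thesis
  proof (rule subgroupI)
    show "dih_subgroup n m c \<subseteq> carrier (dihedral n)"
      by (auto simp: dih_subgroup_def)
    show "dih_subgroup n m c \<noteq> {}"
      using mem[of 0 False] by auto
  next
    fix x assume "x \<in> dih_subgroup n m c"
    moreover obtain a e where "x = dih n a e"
      using \<open>x \<in> dih_subgroup n m c\<close> by (auto simp: dih_subgroup_def elim: dihedral_elem_cases)
    ultimately show "inv\<^bsub>dihedral n\<^esub> x \<in> dih_subgroup n m c"
      by (cases e) (simp_all add: mem inv_dih n)
  next
    fix x y assume x: "x \<in> dih_subgroup n m c" and y: "y \<in> dih_subgroup n m c"
    obtain a e b f where xy: "x = dih n a e" "y = dih n b f"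
      using x y by (auto simp: dih_subgroup_def elim!: dihedral_elem_cases)
    have A: "int m dvd a - (if e then c else 0)" and B: "int m dvd b - (if f then c else 0)"
      using x y by (simp_all add: xy mem)
    have "int m dvd (if e then a - b else a + b) - (if e \<noteq> f then c else 0)"
    proof (cases e)
      case True
      then have "(if e then a - b else a + b) - (if e \<noteq> f then c else 0)
          = (a - (if e then c else 0)) - (b - (if f then c else 0))"
        by auto
      then show ?thesis using A B by simp
    next
      case False
      then have "(if e then a - b else a + b) - (if e \<noteq> f then c else 0)
          = (a - (if e then c else 0)) + (b - (if f then c else 0))"
        by auto
      then show ?thesis using A B by simp
    qed
    then show "x \<otimes>\<^bsub>dihedral n\<^esub> y \<in> dih_subgroup n m c"
      by (simp add: xy dih_mult n mem)
  qed
qed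

lemma generate_dih_subgroup_neq_carrier:
  assumes n: "0 < n" and m: "m dvd n" "m \<noteq> 1" and S: "S \<subseteq> dih_subgroup n m c"
  shows "generate (dihedral n) S \<noteq> carrier (dihedral n)"
proof -
  interpret group "dihedral n" using group_dihedral[OF n] .
  have "generate (dihedral n) S \<subseteq> dih_subgroup n m c"
    using generate_subgroup_incl[OF S subgroup_dih_subgroup[OF n m(1)]] .
  moreover have "dih n 1 False \<notin> dih_subgroup n m c"
    using m by (simp add: dih_in_dih_subgroup_iff[OF n m(1)])
  ultimately show ?thesis
    using dih_in_carrier[OF n] by blast
qed

lemma generate_dihedral_adjacent_reflections:
  assumes n: "0 < n" and S: "S \<subseteq> carrier (dihedral n)"
    and refl: "dih n a True \<in> S" "dih n (a - 1) True \<in> S"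
  shows "generate (dihedral n) S = carrier (dihedral n)"
proof
  interpret group "dihedral n" using group_dihedral[OF n] .
  let ?H = "generate (dihedral n) S"
  show "?H \<subseteq> carrier (dihedral n)"
    using S by (rule generate_incl)
  have "dih n a True \<otimes>\<^bsub>dihedral n\<^esub> dih n (a - 1) True \<in> ?H"
    using refl by (intro generate.eng generate.incl)
  then have rot: "dih n 1 False \<in> ?H"
    using n by (simp add: dih_mult)
  have rot_pow: "dih n (int k) False \<in> ?H" for k
  proof (induction k)
    case 0
    then show ?case using generate.one[of "dihedral n" S] by (simp add: one_dihedral)
  next
    case (Suc k)
    from generate.eng[OF Suc rot] show ?case
      using n by (simp add: dih_mult add.commute)
  qed
  show "carrier (dihedral n) \<subseteq> ?H"
  proof
    fix x assume "x \<in> carrier (dihedral n)"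
    then obtain b e where x: "x = dih n b e" by (rule dihedral_elem_cases)
    define k where "k = nat ((b - (if e then a else 0)) mod int n)"
    have "int k = (b - (if e then a else 0)) mod int n"
      using n by (simp add: k_def)
    then have "[int k = b - (if e then a else 0)] (mod int n)"
      by simp
    then have rk: "dih n (int k) False = dih n (b - (if e then a else 0)) False"
      using n by (rule dih_cong[rotated])
    show "x \<in> ?H"
    proof (cases e)
      case True
      have "dih n (int k) False \<otimes>\<^bsub>dihedral n\<^esub> dih n a True \<in> ?H"
        by (rule generate.eng[OF rot_pow generate.incl[OF refl(1)]])
      then show ?thesis
        using n True by (simp add: x rk dih_mult)
    next
      case False
      then show ?thesis using rot_pow[of k] by (simp add: x rk)
    qed
  qed
qed

lemma top_equiv_reflection_braid:
  assumes n: "0 < n" and xs: "set xs \<subseteq> carrier (dihedral n)" and ys: "set ys \<subseteq> carrier (dihedral n)"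
  shows "top_equiv (dihedral n) (xs @ dih n a True # dih n b True # ys)
           (xs @ dih n (2 * a - b) True # dih n a True # ys)"
proof -
  have "braid_move (dihedral n) (length xs) (xs @ dih n a True # dih n b True # ys)
      = xs @ dih n (2 * a - b) True # dih n a True # ys"
    using n
    by (simp add: braid_move_def list_update_append nth_append dih_mult inv_dih algebra_simps)
  moreover have "top_equiv (dihedral n) (xs @ dih n a True # dih n b True # ys)
      (braid_move (dihedral n) (length xs) (xs @ dih n a True # dih n b True # ys))"
    using xs ys n by (intro top_equiv_braid_move group_dihedral) (auto simp: dih_in_carrier)
  ultimately show ?thesis by simp
qed

lemma top_equiv_reflection_braid_iter:
  assumes n: "0 < n" and xs: "set xs \<subseteq> carrier (dihedral n)" and ys: "set ys \<subseteq> carrier (dihedral n)"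
  shows "top_equiv (dihedral n) (xs @ dih n a True # dih n b True # ys)
           (xs @ dih n (a + k * (a - b)) True # dih n (b + k * (a - b)) True # ys)"
proof -
  have nat_iter: "top_equiv (dihedral n) (xs @ dih n a True # dih n b True # ys)
      (xs @ dih n (a + int j * (a - b)) True # dih n (b + int j * (a - b)) True # ys)" for a b j
  proof (induction j)
    case (Suc j)
    note Suc.IH
    also have "top_equiv (dihedral n)
        (xs @ dih n (a + int j * (a - b)) True # dih n (b + int j * (a - b)) True # ys)
        (xs @ dih n (a + int (Suc j) * (a - b)) True # dih n (b + int (Suc j) * (a - b)) True # ys)"
      using top_equiv_reflection_braid[OF n xs ys, of "a + int j * (a - b)" "b + int j * (a - b)"]
      by (simp add: algebra_simps)
    finally show ?case .
  qed (simp add: top_equiv_refl)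
  show ?thesis
  proof (cases k rule: int_cases2)
    case (nonneg j)
    then show ?thesis using nat_iter by simp
  next
    case (nonpos j)
    \<comment> \<open>iterating forward from the target returns to the source, since a - b is invariant\<close>
    show ?thesis
      using nat_iter[of "a - int j * (a - b)" "b - int j * (a - b)" j]
      by (simp add: nonpos algebra_simps top_equiv_sym)
  qed
qed

definition refl_vec :: "nat \<Rightarrow> int \<Rightarrow> int \<Rightarrow> int \<Rightarrow> int \<Rightarrow> (nat \<times> bool) list" where
  "refl_vec p c1 c2 c3 c4 =
     [dih (2 * p) c1 True, dih (2 * p) c2 True, dih (2 * p) c3 True, dih (2 * p) c4 True,
      half_turn p]"

definition canon_vec :: "nat \<Rightarrow> (nat \<times> bool) list" where
  "canon_vec p = refl_vec p 0 0 (- 1 - int p) (- 1)"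

lemma set_refl_vec_subset: "0 < p \<Longrightarrow> set (refl_vec p c1 c2 c3 c4) \<subseteq> carrier (dihedral (2 * p))"
  by (simp add: refl_vec_def dih_in_carrier half_turn_in_carrier)

lemma refl_vec_cong:
  assumes "0 < p" "[c1 = d1] (mod 2 * int p)" "[c2 = d2] (mod 2 * int p)"
    "[c3 = d3] (mod 2 * int p)" "[c4 = d4] (mod 2 * int p)"
  shows "refl_vec p c1 c2 c3 c4 = refl_vec p d1 d2 d3 d4"
  using assms by (simp add: refl_vec_def dih_eq_iff)

lemma list_prod_refl_vec:
  assumes "0 < p"
  shows "list_prod (dihedral (2 * p)) (refl_vec p c1 c2 c3 c4)
    = dih (2 * p) (c1 - c2 + c3 - c4 + int p) False"
  using assms by (simp add: refl_vec_def half_turn_def dih_mult one_dihedral algebra_simps)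

lemma refl_vec_braid12:
  "0 < p \<Longrightarrow> top_equiv (dihedral (2 * p)) (refl_vec p c1 c2 c3 c4)
     (refl_vec p (2 * c1 - c2) c1 c3 c4)"
  using top_equiv_reflection_braid[of "2 * p" "[]"]
  by (simp add: refl_vec_def dih_in_carrier half_turn_in_carrier)

lemma refl_vec_braid23:
  "0 < p \<Longrightarrow> top_equiv (dihedral (2 * p)) (refl_vec p c1 c2 c3 c4)
     (refl_vec p c1 (2 * c2 - c3) c2 c4)"
  using top_equiv_reflection_braid[of "2 * p" "[dih (2 * p) c1 True]"]
  by (simp add: refl_vec_def dih_in_carrier half_turn_in_carrier)

lemma refl_vec_braid34:
  "0 < p \<Longrightarrow> top_equiv (dihedral (2 * p)) (refl_vec p c1 c2 c3 c4)
     (refl_vec p c1 c2 (2 * c3 - c4) c3)"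
  using top_equiv_reflection_braid[of "2 * p" "[dih (2 * p) c1 True, dih (2 * p) c2 True]"]
  by (simp add: refl_vec_def dih_in_carrier half_turn_in_carrier)

lemma refl_vec_braid12_iter:
  "0 < p \<Longrightarrow> top_equiv (dihedral (2 * p)) (refl_vec p c1 c2 c3 c4)
     (refl_vec p (c1 + k * (c1 - c2)) (c2 + k * (c1 - c2)) c3 c4)"
  using top_equiv_reflection_braid_iter[of "2 * p" "[]"]
  by (simp add: refl_vec_def dih_in_carrier half_turn_in_carrier)

lemma refl_vec_braid23_iter:
  "0 < p \<Longrightarrow> top_equiv (dihedral (2 * p)) (refl_vec p c1 c2 c3 c4)
     (refl_vec p c1 (c2 + k * (c2 - c3)) (c3 + k * (c2 - c3)) c4)"
  using top_equiv_reflection_braid_iter[of "2 * p" "[dih (2 * p) c1 True]"]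
  by (simp add: refl_vec_def dih_in_carrier half_turn_in_carrier)

lemma refl_vec_affine:
  assumes p: "0 < p" and u: "coprime u (2 * int p)"
  shows "top_equiv (dihedral (2 * p)) (refl_vec p c1 c2 c3 c4)
           (refl_vec p (u * c1 + t) (u * c2 + t) (u * c3 + t) (u * c4 + t))"
proof -
  have "odd u" using u by simp
  then obtain j where "u = 2 * j + 1" ..
  then have "dih (2 * p) (u * int p) False = half_turn p"
    unfolding half_turn_def using p by (intro dih_cong) (auto simp: cong_iff_dvd_diff algebra_simps)
  then have "map (dih_affine (2 * p) u t) (refl_vec p c1 c2 c3 c4)
      = refl_vec p (u * c1 + t) (u * c2 + t) (u * c3 + t) (u * c4 + t)"
    using p by (simp add: refl_vec_def dih_affine_dih half_turn_def)
  moreover have "dih_affine (2 * p) u t \<in> iso (dihedral (2 * p)) (dihedral (2 * p))"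
    using p u by (intro dih_affine_iso) auto
  ultimately show ?thesis
    using top_equiv_map_iso set_refl_vec_subset[OF p] by metis
qed

lemma coprime_double_prime_iff:
  fixes u :: int
  assumes "Factorial_Ring.prime p"
  shows "coprime u (2 * int p) \<longleftrightarrow> odd u \<and> \<not> int p dvd u"
proof -
  have pi: "Factorial_Ring.prime (int p)" using assms by simp
  have "coprime u (int p) \<longleftrightarrow> \<not> int p dvd u"
    using prime_imp_coprime[OF pi, of u] coprime_common_divisor[of u "int p" "int p"] pi
    by (auto simp: coprime_commute)
  then show ?thesis by simp
qed

text \<open>
  Read with x = c1 - c2 and y = c2 - c3: each alternative is what at most two braid moves
  turn c2 - c3 or c1 - c2 into, see refl_vec_top_equiv_canon_vec.
\<close>

lemma coprime_double_prime_cases: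
  fixes x y :: int
  assumes p: "Factorial_Ring.prime p" and gen: "\<not> (int p dvd x \<and> int p dvd y)"
  shows "coprime y (2 * int p) \<or> coprime x (2 * int p) \<or> coprime (x + y) (2 * int p)
    \<or> coprime (x - y) (2 * int p) \<or> coprime (x + y - int p) (2 * int p)
    \<or> coprime (2 * x + y - int p) (2 * int p)"
proof -
  let ?U = "\<lambda>u. odd u \<and> \<not> int p dvd u"
  have "?U y \<or> ?U x \<or> ?U (x + y) \<or> ?U (x - y) \<or> ?U (x + y - int p) \<or> ?U (2 * x + y - int p)"
  proof (cases "p = 2")
    case True
    then show ?thesis using gen by auto
  next
    case False
    then have odd_p: "odd (int p)" using p prime_ge_2_nat[OF p] by (simp add: prime_odd_nat)
    show ?thesis
    proof (cases "int p dvd y")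
      case True
      then have "\<not> int p dvd x" using gen by blast
      then show ?thesis
        using True odd_p
        by (cases "odd x"; cases "odd y") (auto simp: dvd_add_left_iff dvd_diff_left_iff)
    next
      case y: False
      show ?thesis
      proof (cases "int p dvd x")
        case True
        have eq: "x + y - int p = y + (x - int p)" by simp
        have "int p dvd x - int p" using True by simp
        then have "int p dvd x + y - int p \<longleftrightarrow> int p dvd y"
          unfolding eq by (rule dvd_add_left_iff)
        moreover have "int p dvd x - y \<longleftrightarrow> int p dvd y"
          using True by (rule dvd_diff_right_iff)
        ultimately show ?thesis
          using y odd_p by (cases "odd x"; cases "odd y") auto
      next
        case x: False
        show ?thesis
        proof (cases "int p dvd x + y")
          case True
          have eq: "2 * x + y - int p = x + (x + y - int p)" by simp
          have "int p dvd x + y - int p" using True by simp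
          then have "int p dvd 2 * x + y - int p \<longleftrightarrow> int p dvd x"
            unfolding eq by (rule dvd_add_left_iff)
          then show ?thesis
            using x y odd_p by (cases "odd x"; cases "odd y") auto
        next
          case False
          moreover have "int p dvd x + y - int p \<longleftrightarrow> int p dvd x + y"
            by (rule dvd_diff_left_iff) simp
          ultimately show ?thesis
            using x y odd_p by (cases "odd x"; cases "odd y") auto
        qed
      qed
    qed
  qed
  then show ?thesis by (simp only: coprime_double_prime_iff[OF p])
qed

lemma refl_vec_top_equiv_canon_vec_coprime23:
  assumes p: "0 < p" and rel: "[c1 - c2 + c3 - c4 = int p] (mod 2 * int p)"
    and y: "coprime (c2 - c3) (2 * int p)"
  shows "top_equiv (dihedral (2 * p)) (refl_vec p c1 c2 c3 c4) (canon_vec p)"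
proof -
  define x where "x = c1 - c2"
  obtain w where w: "[(c2 - c3) * w = 1] (mod 2 * int p)"
    using cong_solve_coprime_int[OF y] ..
  then have "coprime w (2 * int p)"
    by (auto simp: coprime_iff_invertible_int mult.commute)
  then obtain j where j: "w = 2 * j + 1"
    by (auto elim: oddE)
  have W: "2 * int p dvd w * (c2 - c3) - 1" and R: "2 * int p dvd c1 - c2 + c3 - c4 - int p"
    using w rel by (simp_all add: cong_iff_dvd_diff mult.commute)
  \<comment> \<open>first make the first two entries congruent, then normalise by r^a s \<mapsto> r^(w a - w c1) s\<close>
  have "top_equiv (dihedral (2 * p)) (refl_vec p c1 c2 c3 c4)
      (refl_vec p c1 (c2 + x * w * (c2 - c3)) (c3 + x * w * (c2 - c3)) c4)"
    by (rule refl_vec_braid23_iter[OF p])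
  also have "top_equiv (dihedral (2 * p)) \<dots>
      (refl_vec p 0 (w * (c2 + x * w * (c2 - c3)) - w * c1)
        (w * (c3 + x * w * (c2 - c3)) - w * c1) (w * c4 - w * c1))"
    using refl_vec_affine[OF p \<open>coprime w (2 * int p)\<close>,
        of c1 "c2 + x * w * (c2 - c3)" "c3 + x * w * (c2 - c3)" c4 "- w * c1"]
    by simp
  also have "\<dots> = refl_vec p 0 0 (- 1) (- 1 - int p)"
  proof (rule refl_vec_cong[OF p cong_refl])
    have "w * (c2 + x * w * (c2 - c3)) - w * c1 - 0 = w * x * (w * (c2 - c3) - 1)"
      by (simp add: x_def algebra_simps)
    then show "[w * (c2 + x * w * (c2 - c3)) - w * c1 = 0] (mod 2 * int p)"
      using W by (simp add: cong_iff_dvd_diff)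
    have "w * (c3 + x * w * (c2 - c3)) - w * c1 - (- 1) = (w * x - 1) * (w * (c2 - c3) - 1)"
      by (simp add: x_def algebra_simps)
    then show "[w * (c3 + x * w * (c2 - c3)) - w * c1 = - 1] (mod 2 * int p)"
      using W by (simp add: cong_iff_dvd_diff)
    have eq: "w * c4 - w * c1 - (- 1 - int p)
        = - (w * (c2 - c3) - 1) - w * (c1 - c2 + c3 - c4 - int p) - 2 * int p * j"
      by (simp add: j algebra_simps)
    have "2 * int p dvd - (w * (c2 - c3) - 1) - w * (c1 - c2 + c3 - c4 - int p) - 2 * int p * j"
      using W R by (intro dvd_diff) (auto simp: dvd_diff_commute)
    then show "[w * c4 - w * c1 = - 1 - int p] (mod 2 * int p)"
      unfolding cong_iff_dvd_diff eq .
  qed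
  also have "top_equiv (dihedral (2 * p)) \<dots> (refl_vec p 0 0 (2 * (- 1) - (- 1 - int p)) (- 1))"
    by (rule refl_vec_braid34[OF p])
  also have "\<dots> = canon_vec p"
    unfolding canon_vec_def using p by (intro refl_vec_cong) (auto simp: cong_iff_dvd_diff)
  finally show ?thesis .
qed

lemma refl_vec_top_equiv_canon_vec_coprime12:
  assumes p: "0 < p" and rel: "[c1 - c2 + c3 - c4 = int p] (mod 2 * int p)"
    and x: "coprime (c1 - c2) (2 * int p)"
  shows "top_equiv (dihedral (2 * p)) (refl_vec p c1 c2 c3 c4) (canon_vec p)"
proof -
  obtain w where w: "[(c1 - c2) * w = 1] (mod 2 * int p)"
    using cong_solve_coprime_int[OF x] ..
  define k where "k = (1 - (c2 - c3)) * w"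
  have "[1 = (c2 + k * (c1 - c2)) - c3] (mod 2 * int p)"
  proof -
    have "[(c2 - c3) + (1 - (c2 - c3)) * ((c1 - c2) * w)
        = (c2 - c3) + (1 - (c2 - c3)) * 1] (mod 2 * int p)"
      using w by (intro cong_add cong_mult) auto
    then show ?thesis by (simp add: k_def algebra_simps cong_sym_eq)
  qed
  then have "coprime ((c2 + k * (c1 - c2)) - c3) (2 * int p)"
    by (rule cong_imp_coprime) simp
  then have "top_equiv (dihedral (2 * p))
      (refl_vec p (c1 + k * (c1 - c2)) (c2 + k * (c1 - c2)) c3 c4) (canon_vec p)"
    using rel by (intro refl_vec_top_equiv_canon_vec_coprime23[OF p]) auto
  with refl_vec_braid12_iter[OF p] show ?thesis
    by (rule top_equiv_trans)
qed

lemma refl_vec_top_equiv_canon_vec: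
  assumes p: "Factorial_Ring.prime p" and rel: "[c1 - c2 + c3 - c4 = int p] (mod 2 * int p)"
    and gen: "\<not> (int p dvd c1 - c2 \<and> int p dvd c2 - c3)"
  shows "top_equiv (dihedral (2 * p)) (refl_vec p c1 c2 c3 c4) (canon_vec p)"
proof -
  have p0: "0 < p" using p by (simp add: prime_gt_0_nat)
  note coprime12 = refl_vec_top_equiv_canon_vec_coprime12[OF p0]
  note coprime23 = refl_vec_top_equiv_canon_vec_coprime23[OF p0]
  have c4: "[c2 - (2 * c3 - c4) = (c1 - c2) + (c2 - c3) - int p] (mod 2 * int p)"
    using rel by (simp add: cong_iff_dvd_diff dvd_diff_commute algebra_simps)
  have c14: "[c1 - (2 * c3 - c4) = 2 * (c1 - c2) + (c2 - c3) - int p] (mod 2 * int p)"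
    using rel by (simp add: cong_iff_dvd_diff dvd_diff_commute algebra_simps)
  from coprime_double_prime_cases[OF p gen] consider
      "coprime (c2 - c3) (2 * int p)" | "coprime (c1 - c2) (2 * int p)"
    | "coprime ((c1 - c2) + (c2 - c3)) (2 * int p)" | "coprime ((c1 - c2) - (c2 - c3)) (2 * int p)"
    | "coprime ((c1 - c2) + (c2 - c3) - int p) (2 * int p)"
    | "coprime (2 * (c1 - c2) + (c2 - c3) - int p) (2 * int p)"
    by blast
  then show ?thesis
  proof cases
    case 1
    then show ?thesis using coprime23 rel by blast
  next
    case 2
    then show ?thesis using coprime12 rel by blast
  next
    case 3
    have "top_equiv (dihedral (2 * p)) (refl_vec p (2 * c1 - c2) c1 c3 c4) (canon_vec p)"
      using 3 rel by (intro coprime23) (simp_all add: algebra_simps)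
    with refl_vec_braid12[OF p0] show ?thesis by (rule top_equiv_trans)
  next
    case 4
    have "top_equiv (dihedral (2 * p)) (refl_vec p c1 (2 * c2 - c3) c2 c4) (canon_vec p)"
      using 4 rel by (intro coprime12) (simp_all add: algebra_simps)
    with refl_vec_braid23[OF p0] show ?thesis by (rule top_equiv_trans)
  next
    case 5
    then have "coprime (c2 - (2 * c3 - c4)) (2 * int p)"
      using c4 by (metis cong_imp_coprime cong_sym)
    then have "top_equiv (dihedral (2 * p)) (refl_vec p c1 c2 (2 * c3 - c4) c3) (canon_vec p)"
      using rel by (intro coprime23) (simp_all add: algebra_simps)
    with refl_vec_braid34[OF p0] show ?thesis by (rule top_equiv_trans)
  next
    case 6
    then have "coprime (c1 - (2 * c3 - c4)) (2 * int p)"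
      using c14 by (metis cong_imp_coprime cong_sym)
    then have "top_equiv (dihedral (2 * p))
        (refl_vec p (2 * c1 - c2) c1 (2 * c3 - c4) c3) (canon_vec p)"
      using rel by (intro coprime23) (simp_all add: algebra_simps)
    with refl_vec_braid12[OF p0] refl_vec_braid34[OF p0] show ?thesis
      by (blast intro: top_equiv_trans)
  qed
qed

lemma gen_vector_02222_dihedral_entry:
  assumes "0 < p" "gen_vector_02222 (dihedral (2 * p)) v" "x \<in> set v"
  shows "(\<exists>a. x = dih (2 * p) a True) \<or> x = half_turn p"
  using assms by (intro dihedral_involution_cases) (auto simp: gen_vector_02222_def)

lemma gen_vector_02222_dihedral_even_reflections:
  assumes p: "0 < p" and v: "gen_vector_02222 (dihedral (2 * p)) v"
  shows "even (length (removeAll (half_turn p) v))"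
proof -
  have "snd x \<longleftrightarrow> half_turn p \<noteq> x" if "x \<in> set v" for x
    using gen_vector_02222_dihedral_entry[OF p v that] by (auto simp: half_turn_def dih_def)
  then have "filter snd v = removeAll (half_turn p) v"
    unfolding removeAll_filter_not_eq by (rule filter_cong[OF refl])
  moreover have "\<not> snd (list_prod (dihedral (2 * p)) v)"
    using v by (simp add: gen_vector_02222_def one_dihedral dih_def)
  ultimately show ?thesis
    by (simp add: snd_list_prod_dihedral)
qed

lemma gen_vector_02222_dihedral_count_half_turn:
  assumes p: "2 \<le> p" and v: "gen_vector_02222 (dihedral (2 * p)) v"
  shows "count_list v (half_turn p) = 1"
proof -
  let ?G = "dihedral (2 * p)" and ?z = "half_turn p"
  have p0: "0 < p" and n: "0 < 2 * p" using p by auto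
  interpret group ?G using group_dihedral[OF n] .
  define R where "R = removeAll ?z v"
  have len: "length v = 5" and sub: "set v \<subseteq> carrier ?G"
    and gen: "generate ?G (set v) = carrier ?G"
    using v by (auto simp: gen_vector_02222_def)
  have count: "count_list v ?z = 5 - length R" "length R \<le> 5"
    using len count_le_length[of v ?z] by (simp_all add: R_def length_removeAll)
  have "list_prod ?G v = \<one>\<^bsub>?G\<^esub>"
    using v by (simp add: gen_vector_02222_def)
  then have prod_R: "?z [^]\<^bsub>?G\<^esub> (5 - length R) \<otimes>\<^bsub>?G\<^esub> list_prod ?G R = \<one>\<^bsub>?G\<^esub>"
    using list_prod_central[OF half_turn_in_carrier[OF p0] half_turn_central[OF p0] sub]
    by (simp add: R_def count)
  have "length R = 0 \<or> length R = 2 \<or> length R = 4"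
    using gen_vector_02222_dihedral_even_reflections[OF p0 v] count(2) unfolding R_def
    by presburger
  moreover have "length R \<noteq> 0"
  proof
    assume "length R = 0"
    then have "dih (2 * p) (5 * int p) False = \<one>\<^bsub>?G\<^esub>"
      using prod_R by (simp add: half_turn_pow p0 dih_in_carrier)
    then show False
      using p0 by (simp add: dih_eq_one_iff[OF n])
  qed
  moreover have "length R \<noteq> 2"
  proof
    assume "length R = 2"
    then obtain x1 x2 where R2: "R = [x1, x2]"
      by (auto simp: length_Suc_conv numeral_eq_Suc)
    have reflection: "\<exists>a. x = dih (2 * p) a True" if "x \<in> set R" for x
      using that gen_vector_02222_dihedral_entry[OF p0 v] by (simp add: R_def) blast
    obtain a b where R: "R = [dih (2 * p) a True, dih (2 * p) b True]"
      using reflection[of x1] reflection[of x2] R2 by auto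
    then have "dih (2 * p) (3 * int p + (a - b)) False = \<one>\<^bsub>?G\<^esub>"
      using prod_R by (simp add: half_turn_pow p0 dih_in_carrier dih_mult one_dihedral)
    then have "2 * int p dvd 3 * int p + (a - b)"
      by (simp add: dih_eq_one_iff[OF n])
    then have "int p dvd 3 * int p + (a - b)"
      by (rule dvd_mult_right)
    then have "int p dvd b - a"
      by (simp add: dvd_add_right_iff dvd_diff_commute)
    moreover have "set v \<subseteq> insert ?z (set R)"
      by (auto simp: R_def)
    ultimately have "set v \<subseteq> dih_subgroup (2 * p) p a"
      using p0 by (auto simp: R dih_in_dih_subgroup_iff half_turn_def)
    then show False
      using generate_dih_subgroup_neq_carrier[OF n _ _, of p] gen p by auto
  qed
  ultimately show ?thesis
    using count by simp
qed

lemma gen_vector_02222_dihedral_shape: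
  assumes p: "2 \<le> p" and v: "gen_vector_02222 (dihedral (2 * p)) v"
  obtains a1 a2 a3 a4 where "count_list v (half_turn p) = 1"
    and "removeAll (half_turn p) v
      = [dih (2 * p) a1 True, dih (2 * p) a2 True, dih (2 * p) a3 True, dih (2 * p) a4 True]"
proof -
  let ?z = "half_turn p"
  have p0: "0 < p" using p by simp
  have count: "count_list v ?z = 1"
    by (rule gen_vector_02222_dihedral_count_half_turn[OF p v])
  have "length v = 5"
    using v by (simp add: gen_vector_02222_def)
  then have "length (removeAll ?z v) = 4"
    by (simp add: length_removeAll count)
  then obtain x1 x2 x3 x4 where R: "removeAll ?z v = [x1, x2, x3, x4]"
    by (auto simp: length_Suc_conv numeral_eq_Suc)
  have "\<exists>a. x = dih (2 * p) a True" if "x \<in> set (removeAll ?z v)" for x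
    using that gen_vector_02222_dihedral_entry[OF p0 v] by simp blast
  then show thesis
    using that count unfolding R by (metis list.set_intros)
qed

lemma gen_vector_02222_refl_vec_top_equiv_canon_vec:
  assumes p: "Factorial_Ring.prime p"
    and v: "gen_vector_02222 (dihedral (2 * p)) (refl_vec p c1 c2 c3 c4)"
  shows "top_equiv (dihedral (2 * p)) (refl_vec p c1 c2 c3 c4) (canon_vec p)"
proof (rule refl_vec_top_equiv_canon_vec[OF p])
  have p2: "2 \<le> p" and n: "0 < 2 * p" using prime_ge_2_nat[OF p] by auto
  have "dih (2 * p) (c1 - c2 + c3 - c4 + int p) False = \<one>\<^bsub>dihedral (2 * p)\<^esub>"
    using v n by (simp add: gen_vector_02222_def list_prod_refl_vec)
  then have "2 * int p dvd c1 - c2 + c3 - c4 + int p"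
    by (simp add: dih_eq_one_iff[OF n])
  moreover have eq: "c1 - c2 + c3 - c4 - int p = (c1 - c2 + c3 - c4 + int p) - 2 * int p"
    by simp
  ultimately show rel: "[c1 - c2 + c3 - c4 = int p] (mod 2 * int p)"
    unfolding cong_iff_dvd_diff eq by (intro dvd_diff) simp_all
  show "\<not> (int p dvd c1 - c2 \<and> int p dvd c2 - c3)"
  proof
    assume "int p dvd c1 - c2 \<and> int p dvd c2 - c3"
    then have d12: "int p dvd c1 - c2" and d23: "int p dvd c2 - c3" by auto
    have d: "int p dvd c1 - c2 + c3 - c4 - int p"
      using rel by (auto simp: cong_iff_dvd_diff intro: dvd_mult_right)
    have "c2 - c1 = - (c1 - c2)" "c3 - c1 = - ((c1 - c2) + (c2 - c3))"
      "c4 - c1 = - (c1 - c2 + c3 - c4 - int p) - (c2 - c3) - int p"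
      by simp_all
    then have "int p dvd c2 - c1" "int p dvd c3 - c1" "int p dvd c4 - c1"
      using d12 d23 d by (simp_all only: dvd_minus_iff dvd_add dvd_diff dvd_refl)
    then have "set (refl_vec p c1 c2 c3 c4) \<subseteq> dih_subgroup (2 * p) p c1"
      using n by (simp add: refl_vec_def dih_in_dih_subgroup_iff half_turn_def)
    then show False
      using generate_dih_subgroup_neq_carrier[OF n _ _, of p] v p2
      by (auto simp: gen_vector_02222_def)
  qed
qed

lemma gen_vector_02222_top_equiv_refl_vec:
  assumes p: "2 \<le> p" and v: "gen_vector_02222 (dihedral (2 * p)) v"
  obtains c1 c2 c3 c4 where "top_equiv (dihedral (2 * p)) v (refl_vec p c1 c2 c3 c4)"
    and "gen_vector_02222 (dihedral (2 * p)) (refl_vec p c1 c2 c3 c4)"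
proof -
  let ?G = "dihedral (2 * p)" and ?z = "half_turn p"
  have p0: "0 < p" and n: "0 < 2 * p" using p by auto
  interpret group ?G using group_dihedral[OF n] .
  obtain a1 a2 a3 a4 where count: "count_list v ?z = 1" and R:
      "removeAll ?z v
        = [dih (2 * p) a1 True, dih (2 * p) a2 True, dih (2 * p) a3 True, dih (2 * p) a4 True]"
    using gen_vector_02222_dihedral_shape[OF p v] .
  obtain pref rest where split: "v = pref @ ?z # rest" and "?z \<notin> set pref" "count_list rest ?z = 0"
    using count_list_Suc_split_first[of v ?z 0] count by auto
  then have "?z \<notin> set rest" by (simp add: count_list_0_iff)
  with R split \<open>?z \<notin> set pref\<close> have w: "pref @ rest @ [?z] = refl_vec p a1 a2 a3 a4"
    by (simp add: refl_vec_def)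
  have sub: "set v \<subseteq> carrier ?G"
    using v by (simp add: gen_vector_02222_def)
  note central = half_turn_in_carrier[OF p0] half_turn_central[OF p0]
  have "top_equiv ?G v (refl_vec p a1 a2 a3 a4)"
    using top_equiv_move_central[OF central, of pref rest] sub by (simp add: split w)
  moreover have "gen_vector_02222 ?G (refl_vec p a1 a2 a3 a4)"
  proof -
    have set: "set (refl_vec p a1 a2 a3 a4) = set v"
      and "count_list (refl_vec p a1 a2 a3 a4) ?z = count_list v ?z"
      and "removeAll ?z (refl_vec p a1 a2 a3 a4) = removeAll ?z v"
      by (auto simp: split simp flip: w)
    then have "list_prod ?G (refl_vec p a1 a2 a3 a4) = list_prod ?G v"
      using list_prod_central[OF central] sub by (metis order_refl)
    moreover have "length (refl_vec p a1 a2 a3 a4) = 5"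
      by (simp add: refl_vec_def)
    ultimately show ?thesis
      using v set by (simp add: gen_vector_02222_def)
  qed
  ultimately show thesis by (rule that)
qed

lemma gen_vector_02222_canon_vec:
  assumes p: "0 < p"
  shows "gen_vector_02222 (dihedral (2 * p)) (canon_vec p)"
proof -
  have n: "0 < 2 * p" using p by simp
  have half_turn: "half_turn p \<noteq> \<one>\<^bsub>dihedral (2 * p)\<^esub>"
    "half_turn p \<otimes>\<^bsub>dihedral (2 * p)\<^esub> half_turn p = \<one>\<^bsub>dihedral (2 * p)\<^esub>"
    using p by (simp_all add: half_turn_def dih_mult dih_eq_one_iff[OF n])
  have "list_prod (dihedral (2 * p)) (canon_vec p) = \<one>\<^bsub>dihedral (2 * p)\<^esub>"
    using p by (simp add: canon_vec_def list_prod_refl_vec one_dihedral)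
  moreover have "generate (dihedral (2 * p)) (set (canon_vec p)) = carrier (dihedral (2 * p))"
    using set_refl_vec_subset[OF p]
    by (intro generate_dihedral_adjacent_reflections[OF n, where a = 0])
      (auto simp: canon_vec_def refl_vec_def)
  ultimately show ?thesis
    using set_refl_vec_subset[OF p] half_turn p
    by (auto simp: gen_vector_02222_def canon_vec_def refl_vec_def dih_mult dih_eq_iff[OF n]
        one_dihedral)
qed

lemma gen_vector_02222_top_equiv_canon_vec:
  assumes p: "Factorial_Ring.prime p" and v: "gen_vector_02222 (dihedral (2 * p)) v"
  shows "top_equiv (dihedral (2 * p)) v (canon_vec p)"
proof -
  obtain c1 c2 c3 c4 where "top_equiv (dihedral (2 * p)) v (refl_vec p c1 c2 c3 c4)"
    and "gen_vector_02222 (dihedral (2 * p)) (refl_vec p c1 c2 c3 c4)"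
    using gen_vector_02222_top_equiv_refl_vec[OF prime_ge_2_nat[OF p] v] .
  then show ?thesis
    using gen_vector_02222_refl_vec_top_equiv_canon_vec[OF p] top_equiv_trans by blast
qed

lemma srot_vector_eq_canon_vec:
  assumes "0 < p"
  shows "[srot (2 * p) 0, srot (2 * p) 0, srot (2 * p) (p + 1), srot (2 * p) 1, rot (2 * p) p]
    = canon_vec p"
  using assms by (simp add: srot_eq_dih rot_eq_dih canon_vec_def refl_vec_def half_turn_def)

theorem proposition2:
  fixes g :: nat
  assumes "g \<ge> 2"
  shows "(\<exists>v. gen_vector_02222 (dihedral (2 * (g - 1))) v)
    \<and> (Factorial_Ring.prime (g - 1) \<longrightarrow>
         (\<forall>v w. gen_vector_02222 (dihedral (2 * (g - 1))) v
             \<longrightarrow> gen_vector_02222 (dihedral (2 * (g - 1))) w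
             \<longrightarrow> top_equiv (dihedral (2 * (g - 1))) v w)
       \<and> gen_vector_02222 (dihedral (2 * (g - 1)))
            [srot (2 * (g - 1)) 0, srot (2 * (g - 1)) 0, srot (2 * (g - 1)) g,
             srot (2 * (g - 1)) 1, rot (2 * (g - 1)) (g - 1)]
       \<and> (\<forall>v. gen_vector_02222 (dihedral (2 * (g - 1))) v
             \<longrightarrow> top_equiv (dihedral (2 * (g - 1))) v
                  [srot (2 * (g - 1)) 0, srot (2 * (g - 1)) 0, srot (2 * (g - 1)) g,
                   srot (2 * (g - 1)) 1, rot (2 * (g - 1)) (g - 1)]))"
proof -
  define p where "p = g - 1"
  have p: "0 < p" and g: "g = p + 1"
    using assms by (simp_all add: p_def)
  have canon: "gen_vector_02222 (dihedral (2 * p)) (canon_vec p)"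
    by (rule gen_vector_02222_canon_vec[OF p])
  have "(\<forall>v w. gen_vector_02222 (dihedral (2 * p)) v \<longrightarrow> gen_vector_02222 (dihedral (2 * p)) w
           \<longrightarrow> top_equiv (dihedral (2 * p)) v w)
      \<and> (\<forall>v. gen_vector_02222 (dihedral (2 * p)) v \<longrightarrow> top_equiv (dihedral (2 * p)) v (canon_vec p))"
    if "Factorial_Ring.prime p"
    using gen_vector_02222_top_equiv_canon_vec[OF that] top_equiv_sym top_equiv_trans by meson
  then show ?thesis
    unfolding p_def[symmetric] using canon srot_vector_eq_canon_vec[OF p] by (auto simp: g)
qed

end
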